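(* Let $\mathcal{M}$ be a II$_1$-factor with faithful normal tracial state $\tau$, $T\in\mathcal{M}$, $\nu_T$ its Brown measure, and let $\psi:[0,1]\to\overline{B_{\Vert T\Vert}}$ be Borel measurable with $\psi([0,t])$ Borel for every $t\in[0,1]$, with $Z=\{z\in\overline{B_{\Vert T\Vert}}:\psi^{-1}(z)\text{ has a minimum}\}$ Borel and $\nu_T(Z)=1$. Let $X=\{\min(\psi^{-1}(z)) : z\in Z\}\subset[0,1]$. If $b\subset[0,1]$ is Borel, then $\psi(b\cap X)$ is Borel.
   Context: $\overline{B_r}=\{z\in\mathbb{C}:|z|\le r\}$. The Brown measure $\nu_T$ is the unique Borel probability measure with $\tau(\log|T-\lambda|)=\int\log|z-\lambda|\,d\nu_T(z)$ for all $\lambda\in\mathbb{C}$. *)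

theory Defs
  imports "HOL-Probability.Probability"
begin

definition is_min_preimage :: "(real \<Rightarrow> complex) \<Rightarrow> complex \<Rightarrow> real \<Rightarrow> bool" where
  "is_min_preimage psi z s \<longleftrightarrow>
     s \<in> {0..1} \<and> psi s = z \<and> (\<forall>s'\<in>{0..1}. psi s' = z \<longrightarrow> s \<le> s')"

definition min_set :: "(real \<Rightarrow> complex) \<Rightarrow> real \<Rightarrow> complex set" where
  "min_set psi r = {z \<in> cball 0 r. \<exists>s. is_min_preimage psi z s}"

definition min_preimage :: "(real \<Rightarrow> complex) \<Rightarrow> complex \<Rightarrow> real" where
  "min_preimage psi z = (THE s. is_min_preimage psi z s)"

end

theory Submission
  imports Defs
begin

text \<open>On Z the first-hitting time m = min_preimage psi satisfies
  m z \<le> a \<longleftrightarrow> z \<in> psi ` {0..a}, so the hypothesis that the sets psi ` {0..t} are Borel makes m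
  Borel measurable on Z. Since psi inverts m, the set psi ` (b \<inter> m ` Z) is the preimage of b
  under m, hence Borel.\<close>

lemma is_min_preimage_unique:
  assumes "is_min_preimage psi z s" and "is_min_preimage psi z s'"
  shows "s = s'"
  using assms unfolding is_min_preimage_def by (metis order_antisym)

lemma min_preimage_eqI:
  assumes "is_min_preimage psi z s"
  shows "min_preimage psi z = s"
  unfolding min_preimage_def using assms by (blast intro: is_min_preimage_unique)

lemma is_min_preimage_min_preimage:
  assumes "\<exists>s. is_min_preimage psi z s"
  shows "is_min_preimage psi z (min_preimage psi z)"
  using assms min_preimage_eqI by metis

lemma min_preimage_le_iff:
  assumes "\<exists>s. is_min_preimage psi z s"
  shows "min_preimage psi z \<le> a \<longleftrightarrow> z \<in> psi ` {0..a}"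
proof
  assume "min_preimage psi z \<le> a"
  with is_min_preimage_min_preimage[OF assms] show "z \<in> psi ` {0..a}"
    unfolding is_min_preimage_def by (metis atLeastAtMost_iff image_eqI)
next
  assume "z \<in> psi ` {0..a}"
  then obtain s where "s \<in> {0..a}" "psi s = z" by auto
  with is_min_preimage_min_preimage[OF assms] show "min_preimage psi z \<le> a"
    unfolding is_min_preimage_def by (cases "s \<le> 1") force+
qed

lemma borel_measurable_min_preimage:
  assumes has_min: "\<And>z. z \<in> Z \<Longrightarrow> \<exists>s. is_min_preimage psi z s"
    and initial_images: "\<And>t. t \<in> {0..1} \<Longrightarrow> psi ` {0..t} \<in> sets borel"
  shows "min_preimage psi \<in> borel_measurable (restrict_space borel Z)"
  unfolding borel_measurable_iff_le
proof
  fix a :: real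
  have "psi ` {0..min a 1} \<in> sets borel"
    using initial_images by (cases "a < 0") auto
  moreover have "{z \<in> Z. min_preimage psi z \<le> a} = Z \<inter> psi ` {0..min a 1}"
  proof -
    have "min_preimage psi z \<le> 1" if "z \<in> Z" for z
      using is_min_preimage_min_preimage[OF has_min[OF that]] by (simp add: is_min_preimage_def)
    then show ?thesis
      using min_preimage_le_iff[OF has_min] by fastforce
  qed
  ultimately show "{z \<in> space (restrict_space borel Z). min_preimage psi z \<le> a}
      \<in> sets (restrict_space borel Z)"
    unfolding sets_restrict_space space_restrict_space space_borel by auto
qed

lemma image_Int_min_preimage_image:
  assumes has_min: "\<And>z. z \<in> Z \<Longrightarrow> \<exists>s. is_min_preimage psi z s"
  shows "psi ` (b \<inter> min_preimage psi ` Z) = {z \<in> Z. min_preimage psi z \<in> b}"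
proof -
  have psi_min: "psi (min_preimage psi z) = z" if "z \<in> Z" for z
    using is_min_preimage_min_preimage[OF has_min[OF that]] by (simp add: is_min_preimage_def)
  show ?thesis
  proof (intro equalityI subsetI)
    fix z assume "z \<in> psi ` (b \<inter> min_preimage psi ` Z)"
    then obtain w where "w \<in> Z" "min_preimage psi w \<in> b" "z = psi (min_preimage psi w)"
      by blast
    then show "z \<in> {z \<in> Z. min_preimage psi z \<in> b}" by (simp add: psi_min)
  next
    fix z assume "z \<in> {z \<in> Z. min_preimage psi z \<in> b}"
    then show "z \<in> psi ` (b \<inter> min_preimage psi ` Z)"
      by (metis (mono_tags, lifting) IntI imageI mem_Collect_eq psi_min)
  qed
qed

theorem lemma11:
  fixes r :: real and \<nu> :: "complex measure" and psi :: "real \<Rightarrow> complex" and b :: "real set"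
  assumes r: "r \<ge> 0"
    and nu_sets: "sets \<nu> = sets borel"
    and nu_prob: "prob_space \<nu>"
    and nu_supp: "emeasure \<nu> (cball 0 r) = 1"
    and psi_meas: "psi \<in> borel_measurable (restrict_space borel {0..1})"
    and psi_range: "psi ` {0..1} \<subseteq> cball 0 r"
    and psi_int: "\<And>t. t \<in> {0..1} \<Longrightarrow> psi ` {0..t} \<in> sets borel"
    and Z_borel: "min_set psi r \<in> sets borel"
    and Z_full: "emeasure \<nu> (min_set psi r) = 1"
    and b_sub: "b \<subseteq> {0..1}"
    and b_borel: "b \<in> sets borel"
  shows "psi ` (b \<inter> (min_preimage psi ` min_set psi r)) \<in> sets borel"
proof -
  define Z where "Z = min_set psi r"
  have has_min: "\<exists>s. is_min_preimage psi z s" if "z \<in> Z" for z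
    using that by (simp add: Z_def min_set_def)
  have "min_preimage psi \<in> borel_measurable (restrict_space borel Z)"
    using has_min psi_int by (rule borel_measurable_min_preimage)
  then have "min_preimage psi -` b \<inter> space (restrict_space borel Z)
      \<in> sets (restrict_space borel Z)"
    using b_borel by (rule measurable_sets)
  moreover have "Z \<in> sets borel"
    using Z_borel by (simp add: Z_def)
  ultimately have "{z \<in> Z. min_preimage psi z \<in> b} \<in> sets borel"
    by (simp add: sets_restrict_space_iff space_restrict_space Int_def conj_commute)
  then show ?thesis
    using image_Int_min_preimage_image[OF has_min] by (simp add: Z_def)
qed

end
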